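(* Let $E$ be a graph satisfying Condition (K), and let $v\in E^0$ support at least two distinct return paths. Then the map $\mathbb{AP}(E)\to\mathbb{AP}(E_C^v)$ given by $(H,B)\mapsto(H,B)$ if $v\notin H$ and $(H,B)\mapsto(H\cup\{u_1,u_2\},B)$ if $v\in H$ is a well-defined order isomorphism.
   Context: A graph $E=(E^0,E^1,r,s)$ consists of countable sets $E^0$ (vertices) and $E^1$ (edges) and maps $r,s\colon E^1\to E^0$. A path is a finite sequence $\mu=e_1\cdots e_n$ ($n\ge1$) of edges with $r(e_i)=s(e_{i+1})$; $s(\mu)=s(e_1)$, $r(\mu)=r(e_n)$. Write $w\ge w'$ if there is a path from $w$ to $w'$. A return path is a path $\mu=e_1\cdots e_n$ with $s(\mu)=r(\mu)$ and $r(e_i)\neq r(\mu)$ for $i<n$; a vertex $w$ supports $\mu$ if $s(\mu)=w$. $E$ satisfies Condition (K) if no vertex supports precisely one return path. A vertex is regular if it emits a finite nonzero number of edges, and an infinite emitter if it emits infinitely many. A subset $K\subseteq E^0$ is hereditary if $w\in K$ and $w\ge w'$ imply $w'\in K$, and saturated if every regular vertex $w$ all of whose emitted edges have range in $K$ lies in $K$. For hereditary saturated $H$, $H_\infty^{\mathrm{fin}}$ is the set of infinite emitters in $E^0\setminus H$ emitting a finite nonzero number of edges with range in $E^0\setminus H$. An admissible pair is $(H,B)$ with $H$ hereditary and saturated and $B\subseteq H_\infty^{\mathrm{fin}}$; $\mathbb{AP}(E)$ denotes the set of admissible pairs, partially ordered by $(H,B)\le(H',B')$ iff $H\subseteq H'$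 and $B\subseteq H'\cup B'$. The Cuntz Splice $E_C^v$ of $E$ at $v$ is the graph with vertex set $E^0\sqcup\{u_1,u_2\}$ and edge set $E^1\sqcup\{f_1,f_2,h_1,h_2,k_1,k_2\}$, old edges keeping range and source, with $f_1\colon v\to u_1$, $f_2\colon u_1\to v$, $h_1\colon u_1\to u_1$, $h_2\colon u_1\to u_2$, $k_1\colon u_2\to u_1$, $k_2\colon u_2\to u_2$ ($e\colon a\to b$ means $s(e)=a$, $r(e)=b$). *)

theory Defs
  imports Main "HOL-Library.Countable_Set"
begin

record ('v, 'e) graph =
  verts :: "'v set"
  edges :: "'e set"
  rng   :: "'e \<Rightarrow> 'v"
  src   :: "'e \<Rightarrow> 'v"

definition wf_graph :: "('v, 'e) graph \<Rightarrow> bool" where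
  "wf_graph E \<longleftrightarrow> countable (verts E) \<and> countable (edges E) \<and>
     (\<forall>e \<in> edges E. src E e \<in> verts E \<and> rng E e \<in> verts E)"

definition is_path :: "('v, 'e) graph \<Rightarrow> 'e list \<Rightarrow> bool" where
  "is_path E \<mu> \<longleftrightarrow> \<mu> \<noteq> [] \<and> set \<mu> \<subseteq> edges E \<and>
     (\<forall>i. Suc i < length \<mu> \<longrightarrow> rng E (\<mu> ! i) = src E (\<mu> ! Suc i))"

definition path_src :: "('v, 'e) graph \<Rightarrow> 'e list \<Rightarrow> 'v" where
  "path_src E \<mu> = src E (hd \<mu>)"

definition path_rng :: "('v, 'e) graph \<Rightarrow> 'e list \<Rightarrow> 'v" where
  "path_rng E \<mu> = rng E (last \<mu>)"

definition reaches :: "('v, 'e) graph \<Rightarrow> 'v \<Rightarrow> 'v \<Rightarrow> bool" where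
  "reaches E w w' \<longleftrightarrow> (\<exists>\<mu>. is_path E \<mu> \<and> path_src E \<mu> = w \<and> path_rng E \<mu> = w')"

definition return_path :: "('v, 'e) graph \<Rightarrow> 'e list \<Rightarrow> bool" where
  "return_path E \<mu> \<longleftrightarrow> is_path E \<mu> \<and> path_src E \<mu> = path_rng E \<mu> \<and>
     (\<forall>i. Suc i < length \<mu> \<longrightarrow> rng E (\<mu> ! i) \<noteq> path_rng E \<mu>)"

definition supports :: "('v, 'e) graph \<Rightarrow> 'v \<Rightarrow> 'e list \<Rightarrow> bool" where
  "supports E w \<mu> \<longleftrightarrow> path_src E \<mu> = w"

definition condition_K :: "('v, 'e) graph \<Rightarrow> bool" where
  "condition_K E \<longleftrightarrow> (\<forall>w \<in> verts E. \<not> (\<exists>!\<mu>. return_path E \<mu> \<and> supports E w \<mu>))"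

definition emitted :: "('v, 'e) graph \<Rightarrow> 'v \<Rightarrow> 'e set" where
  "emitted E w = {e \<in> edges E. src E e = w}"

definition regular :: "('v, 'e) graph \<Rightarrow> 'v \<Rightarrow> bool" where
  "regular E w \<longleftrightarrow> finite (emitted E w) \<and> emitted E w \<noteq> {}"

definition infinite_emitter :: "('v, 'e) graph \<Rightarrow> 'v \<Rightarrow> bool" where
  "infinite_emitter E w \<longleftrightarrow> infinite (emitted E w)"

definition hereditary :: "('v, 'e) graph \<Rightarrow> 'v set \<Rightarrow> bool" where
  "hereditary E K \<longleftrightarrow> K \<subseteq> verts E \<and> (\<forall>w \<in> K. \<forall>w'. reaches E w w' \<longrightarrow> w' \<in> K)"

definition saturated :: "('v, 'e) graph \<Rightarrow> 'v set \<Rightarrow> bool" where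
  "saturated E K \<longleftrightarrow> K \<subseteq> verts E \<and>
     (\<forall>w \<in> verts E. regular E w \<and> (\<forall>e \<in> emitted E w. rng E e \<in> K) \<longrightarrow> w \<in> K)"

definition H_inf_fin :: "('v, 'e) graph \<Rightarrow> 'v set \<Rightarrow> 'v set" where
  "H_inf_fin E H = {w \<in> verts E - H. infinite_emitter E w \<and>
      finite {e \<in> emitted E w. rng E e \<notin> H} \<and> {e \<in> emitted E w. rng E e \<notin> H} \<noteq> {}}"

definition admissible_pairs :: "('v, 'e) graph \<Rightarrow> ('v set \<times> 'v set) set" where
  "admissible_pairs E = {(H, B). hereditary E H \<and> saturated E H \<and> B \<subseteq> H_inf_fin E H}"

definition ap_le :: "('v set \<times> 'v set) \<Rightarrow> ('v set \<times> 'v set) \<Rightarrow> bool" where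
  "ap_le p q \<longleftrightarrow> fst p \<subseteq> fst q \<and> snd p \<subseteq> fst q \<union> snd q"

datatype new_vert = U1 | U2
datatype new_edge = F1 | F2 | H1 | H2 | K1 | K2

definition cuntz_splice :: "('v, 'e) graph \<Rightarrow> 'v \<Rightarrow> ('v + new_vert, 'e + new_edge) graph" where
  "cuntz_splice E v = \<lparr>
     verts = Inl ` verts E \<union> {Inr U1, Inr U2},
     edges = Inl ` edges E \<union> range Inr,
     rng = (\<lambda>x. case x of Inl e \<Rightarrow> Inl (rng E e)
                | Inr F1 \<Rightarrow> Inr U1 | Inr F2 \<Rightarrow> Inl v
                | Inr H1 \<Rightarrow> Inr U1 | Inr H2 \<Rightarrow> Inr U2
                | Inr K1 \<Rightarrow> Inr U1 | Inr K2 \<Rightarrow> Inr U2),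
     src = (\<lambda>x. case x of Inl e \<Rightarrow> Inl (src E e)
                | Inr F1 \<Rightarrow> Inl v | Inr F2 \<Rightarrow> Inr U1
                | Inr H1 \<Rightarrow> Inr U1 | Inr H2 \<Rightarrow> Inr U1
                | Inr K1 \<Rightarrow> Inr U2 | Inr K2 \<Rightarrow> Inr U2) \<rparr>"

definition splice_ap_map :: "'v \<Rightarrow> ('v set \<times> 'v set) \<Rightarrow> (('v + new_vert) set \<times> ('v + new_vert) set)" where
  "splice_ap_map v p = (if v \<in> fst p then (Inl ` fst p \<union> {Inr U1, Inr U2}, Inl ` snd p)
                        else (Inl ` fst p, Inl ` snd p))"

end

theory Submission
  imports Defs
begin

text \<open>
  The new edges join \<open>v\<close>, \<open>u\<^sub>1\<close>, \<open>u\<^sub>2\<close> in both directions, so a hereditary set of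
  \<open>E\<^sub>C\<^sup>v\<close> is its trace \<open>H\<close> on \<open>E\<close>, together with \<open>{u\<^sub>1, u\<^sub>2}\<close> exactly when \<open>v \<in> H\<close>.
  The only old vertex whose emitted edges change is \<open>v\<close>, which gains \<open>f\<^sub>1\<close>. A return path
  at \<open>v\<close> begins with an edge whose range reaches \<open>v\<close> again, so for hereditary \<open>H\<close> with
  \<open>v \<notin> H\<close> that edge already leaves \<open>H\<close>; hence \<open>f\<^sub>1\<close> changes neither saturation at \<open>v\<close>
  nor membership of \<open>v\<close> in \<open>H\<^sup>f\<^sup>i\<^sup>n\<^sub>\<infinity>\<close>. One return path at \<open>v\<close> suffices.
\<close>

lemma cuntz_splice_simps [simp]:
  "verts (cuntz_splice E v) = Inl ` verts E \<union> {Inr U1, Inr U2}"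
  "edges (cuntz_splice E v) = Inl ` edges E \<union> range Inr"
  "rng (cuntz_splice E v) (Inl e) = Inl (rng E e)"
  "rng (cuntz_splice E v) (Inr F1) = Inr U1"
  "rng (cuntz_splice E v) (Inr F2) = Inl v"
  "rng (cuntz_splice E v) (Inr H1) = Inr U1"
  "rng (cuntz_splice E v) (Inr H2) = Inr U2"
  "rng (cuntz_splice E v) (Inr K1) = Inr U1"
  "rng (cuntz_splice E v) (Inr K2) = Inr U2"
  "src (cuntz_splice E v) (Inl e) = Inl (src E e)"
  "src (cuntz_splice E v) (Inr F1) = Inl v"
  "src (cuntz_splice E v) (Inr F2) = Inr U1"
  "src (cuntz_splice E v) (Inr H1) = Inr U1"
  "src (cuntz_splice E v) (Inr H2) = Inr U1"
  "src (cuntz_splice E v) (Inr K1) = Inr U2"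
  "src (cuntz_splice E v) (Inr K2) = Inr U2"
  by (simp_all add: cuntz_splice_def)

lemma emitted_cuntz_splice:
  "emitted (cuntz_splice E v) w =
     Inl ` {e \<in> edges E. Inl (src E e) = w} \<union> Inr ` {y. src (cuntz_splice E v) (Inr y) = w}"
proof (rule set_eqI)
  fix e
  show "e \<in> emitted (cuntz_splice E v) w \<longleftrightarrow>
    e \<in> Inl ` {e \<in> edges E. Inl (src E e) = w} \<union> Inr ` {y. src (cuntz_splice E v) (Inr y) = w}"
    by (cases e) (auto simp: emitted_def)
qed

lemma emitted_cuntz_splice_Inl:
  "emitted (cuntz_splice E v) (Inl x) = Inl ` emitted E x \<union> (if x = v then {Inr F1} else {})"
proof -
  have "{y. src (cuntz_splice E v) (Inr y) = Inl x} = (if x = v then {F1} else {})"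
  proof (rule set_eqI)
    fix y show "y \<in> {y. src (cuntz_splice E v) (Inr y) = Inl x} \<longleftrightarrow> y \<in> (if x = v then {F1} else {})"
      by (cases y) auto
  qed
  then show ?thesis
    unfolding emitted_cuntz_splice by (auto simp: emitted_def)
qed

lemma emitted_cuntz_splice_U1: "emitted (cuntz_splice E v) (Inr U1) = {Inr F2, Inr H1, Inr H2}"
proof -
  have "{y. src (cuntz_splice E v) (Inr y) = Inr U1} = {F2, H1, H2}"
  proof (rule set_eqI)
    fix y show "y \<in> {y. src (cuntz_splice E v) (Inr y) = Inr U1} \<longleftrightarrow> y \<in> {F2, H1, H2}"
      by (cases y) auto
  qed
  then show ?thesis
    unfolding emitted_cuntz_splice by auto
qed

lemma emitted_cuntz_splice_U2: "emitted (cuntz_splice E v) (Inr U2) = {Inr K1, Inr K2}"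
proof -
  have "{y. src (cuntz_splice E v) (Inr y) = Inr U2} = {K1, K2}"
  proof (rule set_eqI)
    fix y show "y \<in> {y. src (cuntz_splice E v) (Inr y) = Inr U2} \<longleftrightarrow> y \<in> {K1, K2}"
      by (cases y) auto
  qed
  then show ?thesis
    unfolding emitted_cuntz_splice by auto
qed

lemma emitted_cuntz_splice_Inl_other:
  "x \<noteq> v \<Longrightarrow> emitted (cuntz_splice E v) (Inl x) = Inl ` emitted E x"
  by (simp add: emitted_cuntz_splice_Inl)

lemma not_infinite_emitter_cuntz_splice_Inr: "\<not> infinite_emitter (cuntz_splice E v) (Inr u)"
  by (cases u) (simp_all add: infinite_emitter_def emitted_cuntz_splice_U1 emitted_cuntz_splice_U2)

lemma Inr_notin_H_inf_fin_cuntz_splice: "Inr u \<notin> H_inf_fin (cuntz_splice E v) K"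
  by (simp add: H_inf_fin_def not_infinite_emitter_cuntz_splice_Inr)

lemma path_rng_nth_mem:
  assumes "is_path G \<mu>" "path_src G \<mu> \<in> K"
    and closed: "\<forall>e\<in>edges G. src G e \<in> K \<longrightarrow> rng G e \<in> K"
    and "i < length \<mu>"
  shows "rng G (\<mu> ! i) \<in> K"
  using \<open>i < length \<mu>\<close>
proof (induction i)
  case 0
  with assms(1,2) have "src G (\<mu> ! 0) \<in> K" "\<mu> ! 0 \<in> edges G"
    by (auto simp: is_path_def path_src_def hd_conv_nth)
  with closed show ?case by blast
next
  case (Suc i)
  with assms(1) have "src G (\<mu> ! Suc i) = rng G (\<mu> ! i)" "\<mu> ! Suc i \<in> edges G"
    by (auto simp: is_path_def)
  with Suc closed show ?case by auto
qed

lemma hereditary_iff_edge_closed: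
  "hereditary G K \<longleftrightarrow> K \<subseteq> verts G \<and> (\<forall>e\<in>edges G. src G e \<in> K \<longrightarrow> rng G e \<in> K)"
proof -
  have "reaches G (src G e) (rng G e)" if "e \<in> edges G" for e
    using that unfolding reaches_def
    by (intro exI[of _ "[e]"]) (auto simp: is_path_def path_src_def path_rng_def)
  moreover have "w' \<in> K"
    if "\<forall>e\<in>edges G. src G e \<in> K \<longrightarrow> rng G e \<in> K" "w \<in> K" "reaches G w w'" for w w'
  proof -
    from \<open>reaches G w w'\<close> obtain \<mu> where \<mu>: "is_path G \<mu>" "path_src G \<mu> = w" "path_rng G \<mu> = w'"
      by (auto simp: reaches_def)
    then have "\<mu> \<noteq> []"
      by (simp add: is_path_def)
    with \<mu> path_rng_nth_mem[OF \<mu>(1) _ that(1), of "length \<mu> - 1"] \<open>w \<in> K\<close> show ?thesis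
      by (simp add: path_rng_def last_conv_nth)
  qed
  ultimately show ?thesis
    unfolding hereditary_def by blast
qed

lemma reaches_rng_hd:
  assumes "is_path G \<mu>" "tl \<mu> \<noteq> []"
  shows "reaches G (rng G (hd \<mu>)) (path_rng G \<mu>)"
proof -
  have "is_path G (tl \<mu>)"
    using assms by (auto simp: is_path_def nth_tl dest: list.set_sel(2))
  moreover have "path_src G (tl \<mu>) = rng G (hd \<mu>)"
    using assms by (cases \<mu>) (auto simp: is_path_def path_src_def hd_conv_nth)
  moreover have "path_rng G (tl \<mu>) = path_rng G \<mu>"
    using assms by (simp add: path_rng_def last_tl)
  ultimately show ?thesis
    unfolding reaches_def by metis
qed

lemma return_path_hd_emitted:
  "return_path E \<mu> \<Longrightarrow> supports E v \<mu> \<Longrightarrow> hd \<mu> \<in> emitted E v"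
  by (auto simp: return_path_def supports_def is_path_def path_src_def emitted_def)

lemma return_path_hd_rng_notin_hereditary:
  assumes "hereditary E H" "v \<notin> H" "return_path E \<mu>" "supports E v \<mu>"
  shows "rng E (hd \<mu>) \<notin> H"
proof
  assume hd_in: "rng E (hd \<mu>) \<in> H"
  have \<mu>: "is_path E \<mu>" "path_rng E \<mu> = v"
    using assms(3,4) by (auto simp: return_path_def supports_def)
  show False
  proof (cases "tl \<mu> = []")
    case True
    with \<mu> have "rng E (hd \<mu>) = v"
      by (cases \<mu>) (auto simp: path_rng_def is_path_def)
    with hd_in \<open>v \<notin> H\<close> show False by simp
  next
    case False
    with \<mu> have "reaches E (rng E (hd \<mu>)) v"
      using reaches_rng_hd by fastforce
    with hd_in assms(1,2) show False
      by (auto simp: hereditary_def)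
  qed
qed

definition splice_set :: "'v \<Rightarrow> 'v set \<Rightarrow> ('v + new_vert) set" where
  "splice_set v H = (if v \<in> H then Inl ` H \<union> {Inr U1, Inr U2} else Inl ` H)"

lemma splice_set_mem [simp]:
  "Inl x \<in> splice_set v H \<longleftrightarrow> x \<in> H"
  "Inr u \<in> splice_set v H \<longleftrightarrow> v \<in> H"
  by (cases u; auto simp: splice_set_def)+

lemma splice_ap_map_eq: "splice_ap_map v (H, B) = (splice_set v H, Inl ` B)"
  by (simp add: splice_ap_map_def splice_set_def)

lemma all_new_edge_iff: "(\<forall>y. P y) \<longleftrightarrow> P F1 \<and> P F2 \<and> P H1 \<and> P H2 \<and> P K1 \<and> P K2"
  by (metis new_edge.exhaust)

lemma hereditary_cuntz_splice_iff:
  "hereditary (cuntz_splice E v) K \<longleftrightarrow> K \<subseteq> verts (cuntz_splice E v)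
     \<and> (\<forall>e\<in>edges E. Inl (src E e) \<in> K \<longrightarrow> Inl (rng E e) \<in> K)
     \<and> (Inl v \<in> K \<longleftrightarrow> Inr U1 \<in> K) \<and> (Inr U1 \<in> K \<longleftrightarrow> Inr U2 \<in> K)"
proof -
  have "(\<forall>y. src (cuntz_splice E v) (Inr y) \<in> K \<longrightarrow> rng (cuntz_splice E v) (Inr y) \<in> K)
    \<longleftrightarrow> (Inl v \<in> K \<longleftrightarrow> Inr U1 \<in> K) \<and> (Inr U1 \<in> K \<longleftrightarrow> Inr U2 \<in> K)"
    unfolding all_new_edge_iff by auto
  then show ?thesis
    unfolding hereditary_iff_edge_closed cuntz_splice_simps(2) ball_Un ball_simps(9) ball_UNIV
    by auto
qed

lemma hereditary_cuntz_splice_splice_set_iff: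
  "v \<in> verts E \<Longrightarrow> hereditary (cuntz_splice E v) (splice_set v H) \<longleftrightarrow> hereditary E H"
  unfolding hereditary_cuntz_splice_iff hereditary_iff_edge_closed[of E]
  by (auto simp: splice_set_def)

lemma hereditary_cuntz_splice_eq_splice_set:
  assumes "hereditary (cuntz_splice E v) K"
  shows "K = splice_set v (Inl -` K)"
proof (rule set_eqI)
  have "Inr u \<in> K \<longleftrightarrow> Inl v \<in> K" for u
    using assms by (cases u) (auto simp: hereditary_cuntz_splice_iff)
  then show "w \<in> K \<longleftrightarrow> w \<in> splice_set v (Inl -` K)" for w
    by (cases w) auto
qed

lemma regular_cuntz_splice_Inl_other:
  "x \<noteq> v \<Longrightarrow> regular (cuntz_splice E v) (Inl x) \<longleftrightarrow> regular E x"
  by (simp add: regular_def emitted_cuntz_splice_Inl_other finite_image_iff)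

lemma saturated_cuntz_splice_splice_set_iff:
  assumes "hereditary E H" "v \<in> verts E" "return_path E \<mu>" "supports E v \<mu>"
  shows "saturated (cuntz_splice E v) (splice_set v H) \<longleftrightarrow> saturated E H"
proof
  assume sat: "saturated (cuntz_splice E v) (splice_set v H)"
  show "saturated E H"
    unfolding saturated_def
  proof (intro conjI ballI impI)
    show "H \<subseteq> verts E"
      using assms(1) by (simp add: hereditary_def)
  next
    fix x assume "x \<in> verts E" and x: "regular E x \<and> (\<forall>e\<in>emitted E x. rng E e \<in> H)"
    show "x \<in> H"
    proof (cases "x = v")
      case True
      with x return_path_hd_emitted[OF assms(3,4)]
        return_path_hd_rng_notin_hereditary[OF assms(1) _ assms(3,4)]
      show ?thesis by blast
    next
      case False
      with x have "regular (cuntz_splice E v) (Inl x)"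
        "\<forall>e\<in>emitted (cuntz_splice E v) (Inl x). rng (cuntz_splice E v) e \<in> splice_set v H"
        by (auto simp: regular_cuntz_splice_Inl_other emitted_cuntz_splice_Inl_other)
      with sat \<open>x \<in> verts E\<close> show ?thesis
        by (auto simp: saturated_def)
    qed
  qed
next
  assume sat: "saturated E H"
  show "saturated (cuntz_splice E v) (splice_set v H)"
    unfolding saturated_def
  proof (intro conjI ballI impI)
    have "hereditary (cuntz_splice E v) (splice_set v H)"
      using assms(1,2) by (simp add: hereditary_cuntz_splice_splice_set_iff)
    then show "splice_set v H \<subseteq> verts (cuntz_splice E v)"
      by (simp add: hereditary_def)
  next
    fix w assume "w \<in> verts (cuntz_splice E v)" and w: "regular (cuntz_splice E v) w \<and>
      (\<forall>e\<in>emitted (cuntz_splice E v) w. rng (cuntz_splice E v) e \<in> splice_set v H)"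
    show "w \<in> splice_set v H"
    proof (cases w)
      case (Inl x)
      show ?thesis
      proof (cases "x = v")
        case True
        with w Inl show ?thesis
          by (auto simp: emitted_cuntz_splice_Inl)
      next
        case False
        with w Inl have "regular E x" "\<forall>e\<in>emitted E x. rng E e \<in> H"
          by (auto simp: regular_cuntz_splice_Inl_other emitted_cuntz_splice_Inl_other)
        with sat Inl \<open>w \<in> verts (cuntz_splice E v)\<close> show ?thesis
          by (auto simp: saturated_def)
      qed
    next
      case (Inr u)
      with w show ?thesis
        by (cases u) (auto simp: emitted_cuntz_splice_U1 emitted_cuntz_splice_U2)
    qed
  qed
qed

lemma H_inf_fin_cuntz_splice_splice_set:
  assumes "hereditary E H" "return_path E \<mu>" "supports E v \<mu>"
  shows "H_inf_fin (cuntz_splice E v) (splice_set v H) = Inl ` H_inf_fin E H"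
proof (rule set_eqI)
  fix w
  show "w \<in> H_inf_fin (cuntz_splice E v) (splice_set v H) \<longleftrightarrow> w \<in> Inl ` H_inf_fin E H"
  proof (cases w)
    case (Inl x)
    let ?out = "{e \<in> emitted E x. rng E e \<notin> H}"
    let ?F1 = "if x = v \<and> v \<notin> H then {Inr F1} else {}"
    have out: "{e \<in> emitted (cuntz_splice E v) (Inl x). rng (cuntz_splice E v) e \<notin> splice_set v H}
      = Inl ` ?out \<union> ?F1"
      by (auto simp: emitted_cuntz_splice_Inl)
    have "?out \<noteq> {}" if "x = v" "v \<notin> H"
      using that return_path_hd_emitted[OF assms(2,3)]
        return_path_hd_rng_notin_hereditary[OF assms(1) _ assms(2,3)] by blast
    then have nonempty: "x \<notin> H \<Longrightarrow> Inl ` ?out \<union> ?F1 \<noteq> {} \<longleftrightarrow> ?out \<noteq> {}"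
      by auto
    have verts: "Inl x \<in> verts (cuntz_splice E v) \<longleftrightarrow> x \<in> verts E"
      by auto
    have finite: "finite (Inl ` ?out \<union> ?F1) \<longleftrightarrow> finite ?out"
      by (simp add: finite_image_iff)
    have infinite: "infinite_emitter (cuntz_splice E v) (Inl x) \<longleftrightarrow> infinite_emitter E x"
      by (simp add: infinite_emitter_def emitted_cuntz_splice_Inl finite_image_iff)
    have lhs: "Inl x \<in> H_inf_fin (cuntz_splice E v) (splice_set v H) \<longleftrightarrow> x \<in> verts E \<and> x \<notin> H
      \<and> infinite_emitter (cuntz_splice E v) (Inl x) \<and> finite (Inl ` ?out \<union> ?F1) \<and> Inl ` ?out \<union> ?F1 \<noteq> {}"
      unfolding H_inf_fin_def mem_Collect_eq Diff_iff out splice_set_mem(1) verts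
      by blast
    have rhs: "Inl x \<in> Inl ` H_inf_fin E H \<longleftrightarrow> x \<in> verts E \<and> x \<notin> H
      \<and> infinite_emitter E x \<and> finite ?out \<and> ?out \<noteq> {}"
      unfolding H_inf_fin_def inj_image_mem_iff[OF inj_Inl] by blast
    show ?thesis
      unfolding Inl lhs rhs finite infinite using nonempty by meson
  next
    case (Inr u)
    then show ?thesis
      by (auto simp: Inr_notin_H_inf_fin_cuntz_splice)
  qed
qed

lemma splice_ap_map_mem_admissible_pairs_iff:
  assumes "v \<in> verts E" "return_path E \<mu>" "supports E v \<mu>"
  shows "splice_ap_map v p \<in> admissible_pairs (cuntz_splice E v) \<longleftrightarrow> p \<in> admissible_pairs E"
proof -
  obtain H B where p: "p = (H, B)"
    by fastforce
  show ?thesis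
  proof (cases "hereditary E H")
    case True
    with assms have "hereditary (cuntz_splice E v) (splice_set v H)"
      "saturated (cuntz_splice E v) (splice_set v H) \<longleftrightarrow> saturated E H"
      "H_inf_fin (cuntz_splice E v) (splice_set v H) = Inl ` H_inf_fin E H"
      by (simp_all add: hereditary_cuntz_splice_splice_set_iff saturated_cuntz_splice_splice_set_iff
          H_inf_fin_cuntz_splice_splice_set)
    with True show ?thesis
      by (simp add: p admissible_pairs_def splice_ap_map_eq inj_image_subset_iff)
  next
    case False
    with assms(1) show ?thesis
      by (simp add: p admissible_pairs_def splice_ap_map_eq hereditary_cuntz_splice_splice_set_iff)
  qed
qed

lemma admissible_pairs_cuntz_splice_eq_splice_ap_map:
  assumes "q \<in> admissible_pairs (cuntz_splice E v)"
  shows "q = splice_ap_map v (Inl -` fst q, Inl -` snd q)"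
proof -
  obtain K B' where q: "q = (K, B')"
    by fastforce
  have "w \<in> range Inl" if "w \<in> H_inf_fin (cuntz_splice E v) K" for w
    using that by (cases w) (auto simp: Inr_notin_H_inf_fin_cuntz_splice)
  then have "B' = Inl ` (Inl -` B')"
    using assms by (auto simp: q admissible_pairs_def)
  moreover have "K = splice_set v (Inl -` K)"
    using assms by (intro hereditary_cuntz_splice_eq_splice_set[of E]) (simp add: q admissible_pairs_def)
  ultimately show ?thesis
    unfolding q splice_ap_map_eq fst_conv snd_conv prod.inject by blast
qed

lemma inj_splice_ap_map: "inj (splice_ap_map v)"
proof (rule injI)
  fix p q
  assume eq: "splice_ap_map v p = splice_ap_map v q"
  obtain H B H' B' where pq: "p = (H, B)" "q = (H', B')"
    by fastforce
  from eq have H: "splice_set v H = splice_set v H'" and B: "B = B'"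
    by (simp_all add: pq splice_ap_map_eq inj_image_eq_iff)
  from H have "H = H'"
    by (metis splice_set_mem(1) subsetI subset_antisym)
  with B show "p = q"
    by (simp add: pq)
qed

lemma ap_le_splice_ap_map_iff: "ap_le (splice_ap_map v p) (splice_ap_map v q) \<longleftrightarrow> ap_le p q"
proof -
  obtain H B H' B' where pq: "p = (H, B)" "q = (H', B')"
    by fastforce
  have "splice_set v H \<subseteq> splice_set v H' \<longleftrightarrow> H \<subseteq> H'"
    by (auto simp: splice_set_def)
  moreover have "Inl ` B \<subseteq> splice_set v H' \<union> Inl ` B' \<longleftrightarrow> B \<subseteq> H' \<union> B'"
    by auto
  ultimately show ?thesis
    by (simp add: ap_le_def pq splice_ap_map_eq)
qed

theorem proposition2p9:
  fixes E :: "('v, 'e) graph" and v :: 'v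
  assumes "wf_graph E"
    and "condition_K E"
    and "v \<in> verts E"
    and "\<exists>\<mu>1 \<mu>2. \<mu>1 \<noteq> \<mu>2 \<and> return_path E \<mu>1 \<and> supports E v \<mu>1
                 \<and> return_path E \<mu>2 \<and> supports E v \<mu>2"
  shows "(\<forall>p \<in> admissible_pairs E. splice_ap_map v p \<in> admissible_pairs (cuntz_splice E v))
    \<and> bij_betw (splice_ap_map v) (admissible_pairs E) (admissible_pairs (cuntz_splice E v))
    \<and> (\<forall>p \<in> admissible_pairs E. \<forall>q \<in> admissible_pairs E.
          ap_le p q \<longleftrightarrow> ap_le (splice_ap_map v p) (splice_ap_map v q))"
proof -
  from assms(4) obtain \<mu> where "return_path E \<mu>" "supports E v \<mu>"
    by blast
  note mem_iff = splice_ap_map_mem_admissible_pairs_iff[OF assms(3) this]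
  then have maps_to: "\<forall>p \<in> admissible_pairs E. splice_ap_map v p \<in> admissible_pairs (cuntz_splice E v)"
    by blast
  have "admissible_pairs (cuntz_splice E v) \<subseteq> splice_ap_map v ` admissible_pairs E"
  proof
    fix q assume q: "q \<in> admissible_pairs (cuntz_splice E v)"
    then have "q = splice_ap_map v (Inl -` fst q, Inl -` snd q)"
      by (rule admissible_pairs_cuntz_splice_eq_splice_ap_map)
    with q mem_iff show "q \<in> splice_ap_map v ` admissible_pairs E"
      by (metis image_eqI)
  qed
  with maps_to have "splice_ap_map v ` admissible_pairs E = admissible_pairs (cuntz_splice E v)"
    by blast
  moreover have "inj_on (splice_ap_map v) (admissible_pairs E)"
    using inj_splice_ap_map by (rule inj_on_subset) simp
  ultimately show ?thesis
    using maps_to by (simp add: bij_betw_def ap_le_splice_ap_map_iff)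
qed

end
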